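(* For every $s\in I(\Phi)$ there exist a Weyl chamber $C$, a special involution $\varepsilon\in I^*(\Phi)$ and pairwise strongly orthogonal roots $\beta_1,\dots,\beta_r\in\Phi^\varepsilon_\circ\cap\Phi^s_\bullet$ such that $s=\varepsilon\circ s_{\beta_1}\circ\cdots\circ s_{\beta_r}$, $C$ is an S-chamber for $s$, and $C$ is also an S-chamber for $\varepsilon$ (i.e. $\varepsilon(\Phi^+(C))=\Phi^+(C)$).
   Context: $\Phi$ is a reduced crystallographic root system spanning a real Euclidean space $V$; $s_\beta$ is the reflection in $\beta^\perp$; $I(\Phi)$ is the set of orthogonal involutions of $V$ preserving $\Phi$. For $s\in I(\Phi)$: $\Phi^s_\circ=\{\alpha:s\alpha=\alpha\}$, $\Phi^s_\bullet=\{\alpha:s\alpha=-\alpha\}$, $\Phi^s_\star=\Phi\setminus(\Phi^s_\circ\cup\Phi^s_\bullet)$. $\varepsilon\in I(\Phi)$ is special if $\Phi^\varepsilon_\bullet=\emptyset$; $I^*(\Phi)$ is the set of special involutions. Distinct roots are strongly orthogonal if they are orthogonal and neither their sum nor difference is a root. For a Weyl chamber $C$ with positive roots $\Phi^+(C)$, $C$ is an S-chamber for $s$ if $s(\Phi^+(C)\cap\Phi^s_\star)\subseteq\Phi^+(C)$. *)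

theory Defs
  imports "HOL-Analysis.Analysis"
begin

definition refl :: "'a::euclidean_space \<Rightarrow> 'a \<Rightarrow> 'a" where
  "refl \<beta> x = x - ((2 * (x \<bullet> \<beta>)) / (\<beta> \<bullet> \<beta>)) *\<^sub>R \<beta>"

definition reduced_cryst_root_system :: "'a::euclidean_space set \<Rightarrow> bool" where
  "reduced_cryst_root_system \<Phi> \<longleftrightarrow>
     finite \<Phi> \<and> 0 \<notin> \<Phi> \<and> span \<Phi> = UNIV \<and>
     (\<forall>\<alpha>\<in>\<Phi>. refl \<alpha> ` \<Phi> = \<Phi>) \<and>
     (\<forall>\<alpha>\<in>\<Phi>. \<forall>\<beta>\<in>\<Phi>. 2 * (\<alpha> \<bullet> \<beta>) / (\<beta> \<bullet> \<beta>) \<in> \<int>) \<and>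
     (\<forall>\<alpha>\<in>\<Phi>. \<forall>c::real. c *\<^sub>R \<alpha> \<in> \<Phi> \<longrightarrow> c = 1 \<or> c = -1)"

definition inv_set :: "'a::euclidean_space set \<Rightarrow> ('a \<Rightarrow> 'a) set" where
  "inv_set \<Phi> = {s. orthogonal_transformation s \<and> s \<circ> s = id \<and> s ` \<Phi> = \<Phi>}"

definition Phi_circ :: "'a::euclidean_space set \<Rightarrow> ('a \<Rightarrow> 'a) \<Rightarrow> 'a set" where
  "Phi_circ \<Phi> s = {\<alpha>\<in>\<Phi>. s \<alpha> = \<alpha>}"

definition Phi_bullet :: "'a::euclidean_space set \<Rightarrow> ('a \<Rightarrow> 'a) \<Rightarrow> 'a set" where
  "Phi_bullet \<Phi> s = {\<alpha>\<in>\<Phi>. s \<alpha> = - \<alpha>}"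

definition Phi_star :: "'a::euclidean_space set \<Rightarrow> ('a \<Rightarrow> 'a) \<Rightarrow> 'a set" where
  "Phi_star \<Phi> s = \<Phi> - (Phi_circ \<Phi> s \<union> Phi_bullet \<Phi> s)"

definition special_inv_set :: "'a::euclidean_space set \<Rightarrow> ('a \<Rightarrow> 'a) set" where
  "special_inv_set \<Phi> = {\<epsilon>\<in>inv_set \<Phi>. Phi_bullet \<Phi> \<epsilon> = {}}"

definition strongly_orthogonal :: "'a::euclidean_space set \<Rightarrow> 'a \<Rightarrow> 'a \<Rightarrow> bool" where
  "strongly_orthogonal \<Phi> \<alpha> \<beta> \<longleftrightarrow>
     \<alpha> \<noteq> \<beta> \<and> \<alpha> \<bullet> \<beta> = 0 \<and> \<alpha> + \<beta> \<notin> \<Phi> \<and> \<alpha> - \<beta> \<notin> \<Phi>"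

definition weyl_chamber :: "'a::euclidean_space set \<Rightarrow> 'a set \<Rightarrow> bool" where
  "weyl_chamber \<Phi> C \<longleftrightarrow>
     (let U = - (\<Union>\<alpha>\<in>\<Phi>. {x. \<alpha> \<bullet> x = 0}) in
        \<exists>x\<in>U. C = connected_component_set U x)"

definition pos_roots :: "'a::euclidean_space set \<Rightarrow> 'a set \<Rightarrow> 'a set" where
  "pos_roots \<Phi> C = {\<alpha>\<in>\<Phi>. \<forall>x\<in>C. 0 < \<alpha> \<bullet> x}"

definition S_chamber :: "'a::euclidean_space set \<Rightarrow> ('a \<Rightarrow> 'a) \<Rightarrow> 'a set \<Rightarrow> bool" where
  "S_chamber \<Phi> s C \<longleftrightarrow> s ` (pos_roots \<Phi> C \<inter> Phi_star \<Phi> s) \<subseteq> pos_roots \<Phi> C"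

end

theory Submission
  imports Defs
begin

text \<open>
  Peel off the roots of \<open>\<Phi>\<^sup>s\<^sub>\<bullet>\<close> one at a time. If \<open>\<beta>\<close> has maximal length in \<open>\<Phi>\<^sup>s\<^sub>\<bullet>\<close>, then
  \<open>s \<circ> s\<^sub>\<beta>\<close> is again in \<open>I(\<Phi>)\<close>, and its \<open>-1\<close>-roots lie among the roots of \<open>\<Phi>\<^sup>s\<^sub>\<bullet>\<close>
  orthogonal to \<open>\<beta>\<close> other than \<open>\<beta>\<close>; each such \<open>\<gamma>\<close> is strongly orthogonal to \<open>\<beta>\<close>, because \<open>\<gamma> \<plusminus> \<beta>\<close>
  would be a longer root of \<open>\<Phi>\<^sup>s\<^sub>\<bullet>\<close>. The process ends in a special involution \<open>\<epsilon>\<close>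
  fixing every vector fixed by \<open>s\<close>.

  For the chamber take \<open>u\<close> fixed by \<open>s\<close> and off the hyperplanes of \<open>\<Phi>\<^sup>s\<^sub>\<star>\<close>, and \<open>v\<close> fixed
  by \<open>\<epsilon>\<close> and off all root hyperplanes. For small \<open>t > 0\<close> the point \<open>x = u + t v\<close> is regular
  and fixed by \<open>\<epsilon>\<close>, so its chamber is \<open>\<epsilon>\<close>-stable; and for \<open>\<alpha> \<in> \<Phi>\<^sup>s\<^sub>\<star>\<close> both \<open>\<alpha> \<bullet> x\<close> and
  \<open>s \<alpha> \<bullet> x = \<alpha> \<bullet> (u + t s v)\<close> have the sign of \<open>\<alpha> \<bullet> u\<close>.
\<close>

lemma linear_refl: "linear (refl b)"
  unfolding refl_def
  by (rule linearI) (simp_all add: inner_add_left algebra_simps add_divide_distrib)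

lemma inner_refl_refl: "b \<noteq> 0 \<Longrightarrow> refl b x \<bullet> refl b y = x \<bullet> y"
  unfolding refl_def by (simp add: inner_diff_left inner_diff_right inner_commute field_simps)

lemma orthogonal_transformation_refl: "b \<noteq> 0 \<Longrightarrow> orthogonal_transformation (refl b)"
  by (simp add: orthogonal_transformation_def linear_refl inner_refl_refl)

lemma refl_self: "b \<noteq> 0 \<Longrightarrow> refl b b = - b"
  by (simp add: refl_def scaleR_2)

lemma refl_orthogonal: "x \<bullet> b = 0 \<Longrightarrow> refl b x = x"
  by (simp add: refl_def)

lemma refl_refl: "b \<noteq> 0 \<Longrightarrow> refl b (refl b x) = x"
  by (simp add: refl_def inner_diff_left algebra_simps)

lemma inner_refl_self: "b \<noteq> 0 \<Longrightarrow> refl b x \<bullet> b = - (x \<bullet> b)"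
  by (simp add: refl_def inner_diff_left)

lemma refl_uminus: "refl (- b) = refl b"
  by (simp add: refl_def fun_eq_iff)

lemma orthogonal_transformation_refl_conj:
  assumes "orthogonal_transformation s"
  shows "s (refl b x) = refl (s b) (s x)"
  using assms unfolding orthogonal_transformation_def refl_def
  by (simp add: linear_diff linear_scale)

lemma orthogonal_transformation_inner_antifixed:
  assumes "orthogonal_transformation s" and "s b = - b"
  shows "s y \<bullet> b = - (y \<bullet> b)"
proof -
  have "s y \<bullet> b = - (s y \<bullet> s b)" using \<open>s b = - b\<close> by simp
  then show ?thesis using \<open>orthogonal_transformation s\<close> by (simp add: orthogonal_transformation_def)
qed

lemma orthogonal_involution_adjoint:
  assumes "orthogonal_transformation f" and "f \<circ> f = id"
  shows "f x \<bullet> y = x \<bullet> f y"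
  using assms unfolding orthogonal_transformation_def by (metis comp_apply id_apply)

lemma inv_setD:
  assumes "s \<in> inv_set \<Phi>"
  shows "orthogonal_transformation s" "s ` \<Phi> = \<Phi>" "linear s"
    "\<And>x. s (s x) = x" "\<And>x y. s x \<bullet> y = x \<bullet> s y"
  using assms unfolding inv_set_def
  by (auto simp: orthogonal_transformation_def orthogonal_involution_adjoint pointfree_idE)

lemma distinct_pairwise_conv_nth:
  "distinct xs \<Longrightarrow>
     (\<forall>i<length xs. \<forall>j<length xs. i \<noteq> j \<longrightarrow> P (xs ! i) (xs ! j)) \<longleftrightarrow> pairwise P (set xs)"
  unfolding pairwise_def by (metis in_set_conv_nth nth_eq_iff_index_eq)

lemma inv_set_comp_refl:
  assumes s: "s \<in> inv_set \<Phi>" and "s \<beta> = - \<beta>" "\<beta> \<noteq> 0" "refl \<beta> ` \<Phi> = \<Phi>"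
  shows "s \<circ> refl \<beta> \<in> inv_set \<Phi>"
proof -
  note s = inv_setD[OF s]
  have commute: "s (refl \<beta> x) = refl \<beta> (s x)" for x
    using orthogonal_transformation_refl_conj[OF s(1)] \<open>s \<beta> = - \<beta>\<close> by (simp add: refl_uminus)
  show ?thesis
    unfolding inv_set_def
  proof (intro CollectI conjI)
    show "orthogonal_transformation (s \<circ> refl \<beta>)"
      using s(1) orthogonal_transformation_refl[OF \<open>\<beta> \<noteq> 0\<close>] by (rule orthogonal_transformation_compose)
    show "(s \<circ> refl \<beta>) \<circ> (s \<circ> refl \<beta>) = id"
      using \<open>\<beta> \<noteq> 0\<close> by (simp add: fun_eq_iff commute s(4) refl_refl)
    show "(s \<circ> refl \<beta>) ` \<Phi> = \<Phi>"
      using \<open>refl \<beta> ` \<Phi> = \<Phi>\<close> s(2) by (metis image_comp)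
  qed
qed

lemma Phi_bullet_comp_refl:
  assumes s: "orthogonal_transformation s" and "s \<beta> = - \<beta>" "\<beta> \<noteq> 0"
  shows "Phi_bullet \<Phi> (s \<circ> refl \<beta>) \<subseteq> {\<gamma> \<in> Phi_bullet \<Phi> s. \<gamma> \<bullet> \<beta> = 0} - {\<beta>}"
proof
  fix \<gamma> assume "\<gamma> \<in> Phi_bullet \<Phi> (s \<circ> refl \<beta>)"
  then have \<gamma>: "\<gamma> \<in> \<Phi>" "s (refl \<beta> \<gamma>) = - \<gamma>" by (auto simp: Phi_bullet_def)
  have "\<gamma> \<bullet> \<beta> = - (\<gamma> \<bullet> \<beta>)"
    using arg_cong[OF \<gamma>(2), of "\<lambda>y. y \<bullet> \<beta>"] assms
    by (simp add: orthogonal_transformation_inner_antifixed inner_refl_self)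
  then have \<gamma>\<beta>: "\<gamma> \<bullet> \<beta> = 0" by simp
  then have "s \<gamma> = - \<gamma>" using \<gamma>(2) by (simp add: refl_orthogonal)
  moreover have "\<gamma> \<noteq> \<beta>"
    using \<gamma>(2) assms
    by (auto simp: refl_self orthogonal_transformation_linear linear_neg eq_neg_iff_add_eq_0
        scaleR_2[symmetric])
  ultimately show "\<gamma> \<in> {\<gamma> \<in> Phi_bullet \<Phi> s. \<gamma> \<bullet> \<beta> = 0} - {\<beta>}"
    using \<gamma>(1) \<gamma>\<beta> by (simp add: Phi_bullet_def)
qed

lemma strongly_orthogonal_if_max_length:
  assumes s: "linear s" and \<beta>: "\<beta> \<in> Phi_bullet \<Phi> s" and \<gamma>: "\<gamma> \<in> Phi_bullet \<Phi> s"
    and "\<gamma> \<bullet> \<beta> = 0" "\<gamma> \<noteq> \<beta>" "0 \<notin> \<Phi>"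
    and max: "\<And>g. g \<in> Phi_bullet \<Phi> s \<Longrightarrow> g \<bullet> g \<le> \<beta> \<bullet> \<beta>"
  shows "strongly_orthogonal \<Phi> \<gamma> \<beta> \<and> strongly_orthogonal \<Phi> \<beta> \<gamma>"
proof -
  have not_root: "w \<notin> \<Phi>" if "s w = - w" "w \<bullet> w = \<gamma> \<bullet> \<gamma> + \<beta> \<bullet> \<beta>" for w
  proof
    assume "w \<in> \<Phi>"
    with that have "\<gamma> \<bullet> \<gamma> + \<beta> \<bullet> \<beta> \<le> \<beta> \<bullet> \<beta>" using max[of w] by (simp add: Phi_bullet_def)
    moreover have "\<gamma> \<noteq> 0" using \<gamma> \<open>0 \<notin> \<Phi>\<close> by (auto simp: Phi_bullet_def)
    ultimately show False using inner_gt_zero_iff[of \<gamma>] by linarith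
  qed
  have "s \<gamma> = - \<gamma>" "s \<beta> = - \<beta>" using \<beta> \<gamma> by (auto simp: Phi_bullet_def)
  then have "s (\<gamma> + \<beta>) = - (\<gamma> + \<beta>)" "s (\<gamma> - \<beta>) = - (\<gamma> - \<beta>)" "s (\<beta> - \<gamma>) = - (\<beta> - \<gamma>)"
    by (simp_all add: linear_add[OF s] linear_diff[OF s])
  moreover have "(\<gamma> + \<beta>) \<bullet> (\<gamma> + \<beta>) = \<gamma> \<bullet> \<gamma> + \<beta> \<bullet> \<beta>" "(\<gamma> - \<beta>) \<bullet> (\<gamma> - \<beta>) = \<gamma> \<bullet> \<gamma> + \<beta> \<bullet> \<beta>"
    "(\<beta> - \<gamma>) \<bullet> (\<beta> - \<gamma>) = \<gamma> \<bullet> \<gamma> + \<beta> \<bullet> \<beta>"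
    using \<open>\<gamma> \<bullet> \<beta> = 0\<close>
    by (simp_all add: inner_add_left inner_add_right inner_diff_left inner_diff_right inner_commute)
  ultimately have "\<gamma> + \<beta> \<notin> \<Phi>" "\<gamma> - \<beta> \<notin> \<Phi>" "\<beta> - \<gamma> \<notin> \<Phi>"
    using not_root by blast+
  moreover from this(1) have "\<beta> + \<gamma> \<notin> \<Phi>" by (metis add.commute)
  ultimately show ?thesis
    using \<open>\<gamma> \<bullet> \<beta> = 0\<close> \<open>\<gamma> \<noteq> \<beta>\<close> by (simp add: strongly_orthogonal_def inner_commute)
qed

lemma special_involution_decomposition:
  assumes fin: "finite \<Phi>" and zero: "0 \<notin> \<Phi>" and refl_closed: "\<forall>\<alpha>\<in>\<Phi>. refl \<alpha> ` \<Phi> = \<Phi>"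
    and "s \<in> inv_set \<Phi>"
  shows "\<exists>\<epsilon> \<beta>s. \<epsilon> \<in> special_inv_set \<Phi> \<and> distinct \<beta>s \<and>
           set \<beta>s \<subseteq> Phi_circ \<Phi> \<epsilon> \<inter> Phi_bullet \<Phi> s \<and>
           pairwise (strongly_orthogonal \<Phi>) (set \<beta>s) \<and>
           s = foldl (\<lambda>f \<beta>. f \<circ> refl \<beta>) \<epsilon> \<beta>s \<and> (\<forall>v. s v = v \<longrightarrow> \<epsilon> v = v)"
  using \<open>s \<in> inv_set \<Phi>\<close>
proof (induction "card (Phi_bullet \<Phi> s)" arbitrary: s rule: less_induct)
  case less
  note s = inv_setD[OF less.prems]
  show ?case
  proof (cases "Phi_bullet \<Phi> s = {}")
    case True
    then show ?thesis
      by (intro exI[of _ s] exI[of _ "[]"]) (simp add: special_inv_set_def less.prems)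
  next
    case False
    have fin_bullet: "finite (Phi_bullet \<Phi> s)" using fin by (simp add: Phi_bullet_def)
    obtain \<beta> where \<beta>: "\<beta> \<in> Phi_bullet \<Phi> s"
      and Max: "Max ((\<lambda>g. g \<bullet> g) ` Phi_bullet \<Phi> s) = \<beta> \<bullet> \<beta>"
      using obtains_MAX[OF fin_bullet False, of "\<lambda>g. g \<bullet> g"] by blast
    have max: "g \<bullet> g \<le> \<beta> \<bullet> \<beta>" if "g \<in> Phi_bullet \<Phi> s" for g
      unfolding Max[symmetric] using fin_bullet that by simp
    have "\<beta> \<in> \<Phi>" "s \<beta> = - \<beta>" "\<beta> \<noteq> 0" using \<beta> zero by (auto simp: Phi_bullet_def)
    define s' where "s' = s \<circ> refl \<beta>"
    have s': "s' \<in> inv_set \<Phi>"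
      unfolding s'_def using less.prems \<open>s \<beta> = - \<beta>\<close> \<open>\<beta> \<noteq> 0\<close> \<open>\<beta> \<in> \<Phi>\<close> refl_closed
      by (intro inv_set_comp_refl) auto
    have bullet': "Phi_bullet \<Phi> s' \<subseteq> {\<gamma> \<in> Phi_bullet \<Phi> s. \<gamma> \<bullet> \<beta> = 0} - {\<beta>}"
      unfolding s'_def using s(1) \<open>s \<beta> = - \<beta>\<close> \<open>\<beta> \<noteq> 0\<close> by (rule Phi_bullet_comp_refl)
    then have "card (Phi_bullet \<Phi> s') < card (Phi_bullet \<Phi> s)"
      using \<beta> fin_bullet by (intro psubset_card_mono) auto
    from less.hyps[OF this s'] obtain \<epsilon> \<beta>s where
      \<epsilon>: "\<epsilon> \<in> special_inv_set \<Phi>" and "distinct \<beta>s"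
      and \<beta>s: "set \<beta>s \<subseteq> Phi_circ \<Phi> \<epsilon> \<inter> Phi_bullet \<Phi> s'"
      and pairwise: "pairwise (strongly_orthogonal \<Phi>) (set \<beta>s)"
      and fold: "s' = foldl (\<lambda>f \<beta>. f \<circ> refl \<beta>) \<epsilon> \<beta>s"
      and fixed: "\<forall>v. s' v = v \<longrightarrow> \<epsilon> v = v" by blast
    have so: "strongly_orthogonal \<Phi> \<gamma> \<beta> \<and> strongly_orthogonal \<Phi> \<beta> \<gamma>" if "\<gamma> \<in> set \<beta>s" for \<gamma>
    proof (rule strongly_orthogonal_if_max_length[OF s(3) \<beta> _ _ _ zero max])
      show "\<gamma> \<in> Phi_bullet \<Phi> s" "\<gamma> \<bullet> \<beta> = 0" "\<gamma> \<noteq> \<beta>" using that \<beta>s bullet' by auto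
    qed
    show ?thesis
    proof (intro exI[of _ \<epsilon>] exI[of _ "\<beta>s @ [\<beta>]"] conjI allI impI)
      show "\<epsilon> \<in> special_inv_set \<Phi>" by (fact \<epsilon>)
      show "distinct (\<beta>s @ [\<beta>])" using \<open>distinct \<beta>s\<close> \<beta>s bullet' by auto
      have "\<epsilon> \<beta> = \<beta>"
        using fixed \<open>s \<beta> = - \<beta>\<close> \<open>\<beta> \<noteq> 0\<close> s(3) by (simp add: s'_def refl_self linear_neg)
      then show "set (\<beta>s @ [\<beta>]) \<subseteq> Phi_circ \<Phi> \<epsilon> \<inter> Phi_bullet \<Phi> s"
        using \<beta>s bullet' \<beta> \<open>\<beta> \<in> \<Phi>\<close> by (auto simp: Phi_circ_def)
      show "pairwise (strongly_orthogonal \<Phi>) (set (\<beta>s @ [\<beta>]))"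
        using pairwise so by (simp add: pairwise_insert)
      show "s = foldl (\<lambda>f \<beta>. f \<circ> refl \<beta>) \<epsilon> (\<beta>s @ [\<beta>])"
        using fold[symmetric] \<open>\<beta> \<noteq> 0\<close> by (simp add: s'_def refl_refl fun_eq_iff)
    next
      fix v assume "s v = v"
      then have "v \<bullet> \<beta> = 0"
        using orthogonal_transformation_inner_antifixed[OF s(1) \<open>s \<beta> = - \<beta>\<close>, of v] by simp
      then show "\<epsilon> v = v" using fixed \<open>s v = v\<close> by (simp add: s'_def refl_orthogonal)
    qed
  qed
qed

definition chamber_of :: "'a::euclidean_space set \<Rightarrow> 'a \<Rightarrow> 'a set" where
  "chamber_of \<Phi> x = connected_component_set (- (\<Union>\<alpha>\<in>\<Phi>. {y. \<alpha> \<bullet> y = 0})) x"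

lemma weyl_chamber_chamber_of: "\<forall>\<alpha>\<in>\<Phi>. \<alpha> \<bullet> x \<noteq> 0 \<Longrightarrow> weyl_chamber \<Phi> (chamber_of \<Phi> x)"
  unfolding weyl_chamber_def chamber_of_def Let_def by blast

lemma pos_roots_chamber_of:
  assumes x: "\<forall>\<alpha>\<in>\<Phi>. \<alpha> \<bullet> x \<noteq> 0"
  shows "pos_roots \<Phi> (chamber_of \<Phi> x) = {\<alpha> \<in> \<Phi>. 0 < \<alpha> \<bullet> x}"
proof -
  have x_in: "x \<in> chamber_of \<Phi> x" using x by (simp add: chamber_of_def)
  \<comment> \<open>a root changing sign inside the connected chamber would vanish somewhere in it\<close>
  have "0 < \<alpha> \<bullet> y" if \<alpha>: "\<alpha> \<in> \<Phi>" "0 < \<alpha> \<bullet> x" and y: "y \<in> chamber_of \<Phi> x" for \<alpha> y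
  proof (rule ccontr)
    assume "\<not> 0 < \<alpha> \<bullet> y"
    then obtain w where "w \<in> chamber_of \<Phi> x" "\<alpha> \<bullet> w = 0"
      using connected_ivt_hyperplane[OF _ y x_in, of \<alpha> 0] \<alpha>(2)
      by (auto simp: chamber_of_def)
    then show False
      using connected_component_subset \<alpha>(1) by (fastforce simp: chamber_of_def)
  qed
  then show ?thesis using x_in by (auto simp: pos_roots_def)
qed

lemma subspace_avoids_hyperplanes:
  assumes L: "subspace L" and "finite A" and "\<forall>a\<in>A. \<exists>y\<in>L. a \<bullet> y \<noteq> 0"
  shows "\<exists>x\<in>L. \<forall>a\<in>A. a \<bullet> x \<noteq> 0"
  using assms(2,3)
proof (induction A rule: finite_induct)
  case empty
  then show ?case using subspace_0[OF L] by auto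
next
  case (insert a A)
  then obtain x where "x \<in> L" and x: "\<forall>b\<in>A. b \<bullet> x \<noteq> 0" by auto
  obtain y where "y \<in> L" and y: "a \<bullet> y \<noteq> 0" using insert.prems by auto
  \<comment> \<open>each \<open>b\<close> with \<open>b \<bullet> y \<noteq> 0\<close> vanishes at \<open>x + t y\<close> for exactly one \<open>t\<close>\<close>
  have "finite ((\<lambda>b. - (b \<bullet> x) / (b \<bullet> y)) ` insert a A)" using insert.hyps(1) by simp
  then obtain t :: real where t: "t \<notin> (\<lambda>b. - (b \<bullet> x) / (b \<bullet> y)) ` insert a A"
    using ex_new_if_finite[OF infinite_UNIV_char_0] by blast
  have "b \<bullet> (x + t *\<^sub>R y) \<noteq> 0" if b: "b \<in> insert a A" for b
  proof
    assume "b \<bullet> (x + t *\<^sub>R y) = 0"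
    then have sum: "b \<bullet> x + t * (b \<bullet> y) = 0" by (simp add: inner_add_right)
    show False
    proof (cases "b \<bullet> y = 0")
      case True
      then show False using b x y sum by auto
    next
      case False
      then have "t = - (b \<bullet> x) / (b \<bullet> y)" using sum by (simp add: field_simps)
      then show False using b t by blast
    qed
  qed
  moreover have "x + t *\<^sub>R y \<in> L"
    using \<open>x \<in> L\<close> \<open>y \<in> L\<close> L by (simp add: subspace_add subspace_mul)
  ultimately show ?case by blast
qed

lemma exists_fixed_vector_off_hyperplanes:
  assumes s: "orthogonal_transformation s" "\<And>x. s (s x) = x"
    and "finite A" and A: "\<forall>a\<in>A. s a \<noteq> - a"
  shows "\<exists>x. s x = x \<and> (\<forall>a\<in>A. a \<bullet> x \<noteq> 0)"
proof -
  have "subspace {x. s x = x}"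
    using orthogonal_transformation_linear[OF s(1)]
    by (simp add: subspace_def linear_0 linear_add linear_scale)
  moreover have "\<exists>y\<in>{x. s x = x}. a \<bullet> y \<noteq> 0" if "a \<in> A" for a
  proof -
    \<comment> \<open>\<open>(a + s a) \<bullet> (a + s a) = 2 (a \<bullet> (a + s a))\<close> since \<open>s\<close> preserves lengths\<close>
    define y where "y = a + s a"
    have "s y = y" using s by (simp add: y_def orthogonal_transformation_linear linear_add)
    moreover have "y \<bullet> y = 2 * (a \<bullet> y)"
      using s(1) by (simp add: y_def orthogonal_transformation_def inner_add_left inner_add_right
          inner_commute)
    moreover have "y \<noteq> 0" using A that by (simp add: y_def add_eq_0_iff)
    ultimately show ?thesis by (intro bexI[of _ y]) auto
  qed
  ultimately show ?thesis using subspace_avoids_hyperplanes[OF _ \<open>finite A\<close>] by blast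
qed

lemma eventually_sgn_inner_perturb:
  assumes "a \<bullet> u \<noteq> 0"
  shows "\<forall>\<^sub>F t in at_right 0. sgn (a \<bullet> (u + t *\<^sub>R w)) = sgn (a \<bullet> u)"
proof -
  have lim: "((\<lambda>t. a \<bullet> (u + t *\<^sub>R w)) \<longlongrightarrow> a \<bullet> u) (at_right 0)"
    by (auto intro!: tendsto_eq_intros simp: inner_add_right)
  show ?thesis
  proof (cases "0 < a \<bullet> u")
    case True
    then show ?thesis using order_tendstoD(1)[OF lim True] by (auto elim!: eventually_mono)
  next
    case False
    with assms have neg: "a \<bullet> u < 0" by simp
    show ?thesis using order_tendstoD(2)[OF lim neg] neg by (auto elim!: eventually_mono)
  qed
qed

lemma exists_sign_preserving_perturbation:
  assumes "finite A"
  shows "\<exists>t>0. \<forall>a\<in>A. a \<bullet> u \<noteq> 0 \<longrightarrow>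
           sgn (a \<bullet> (u + t *\<^sub>R v)) = sgn (a \<bullet> u) \<and> sgn (a \<bullet> (u + t *\<^sub>R w)) = sgn (a \<bullet> u)"
proof -
  have "\<forall>\<^sub>F t in at_right 0. a \<bullet> u \<noteq> 0 \<longrightarrow>
          sgn (a \<bullet> (u + t *\<^sub>R v)) = sgn (a \<bullet> u) \<and> sgn (a \<bullet> (u + t *\<^sub>R w)) = sgn (a \<bullet> u)" for a
  proof (cases "a \<bullet> u = 0")
    case False
    show ?thesis
      using eventually_conj[OF eventually_sgn_inner_perturb[OF False, of v]
          eventually_sgn_inner_perturb[OF False, of w]]
      by (rule eventually_mono) simp
  qed simp
  then have "\<forall>\<^sub>F t in at_right 0. \<forall>a\<in>A. a \<bullet> u \<noteq> 0 \<longrightarrow>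
          sgn (a \<bullet> (u + t *\<^sub>R v)) = sgn (a \<bullet> u) \<and> sgn (a \<bullet> (u + t *\<^sub>R w)) = sgn (a \<bullet> u)"
    using assms by (intro eventually_ball_finite) auto
  then have "\<forall>\<^sub>F t in at_right 0. 0 < t \<and> (\<forall>a\<in>A. a \<bullet> u \<noteq> 0 \<longrightarrow>
          sgn (a \<bullet> (u + t *\<^sub>R v)) = sgn (a \<bullet> u) \<and> sgn (a \<bullet> (u + t *\<^sub>R w)) = sgn (a \<bullet> u))"
    using eventually_at_right_less by (rule eventually_conj[rotated])
  then show ?thesis using eventually_happens'[OF trivial_limit_at_right_real] by blast
qed

lemma image_positive_roots_fixed:
  assumes s: "s \<in> inv_set \<Phi>" and "s x = x"
  shows "s ` {\<alpha> \<in> \<Phi>. 0 < \<alpha> \<bullet> x} = {\<alpha> \<in> \<Phi>. 0 < \<alpha> \<bullet> x}"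
proof -
  note s = inv_setD[OF s]
  have maps: "s \<alpha> \<in> {\<alpha> \<in> \<Phi>. 0 < \<alpha> \<bullet> x}" if "\<alpha> \<in> {\<alpha> \<in> \<Phi>. 0 < \<alpha> \<bullet> x}" for \<alpha>
    using that s(2) s(5)[of \<alpha> x] \<open>s x = x\<close> by auto
  show ?thesis
  proof
    show "s ` {\<alpha> \<in> \<Phi>. 0 < \<alpha> \<bullet> x} \<subseteq> {\<alpha> \<in> \<Phi>. 0 < \<alpha> \<bullet> x}" using maps by blast
    show "{\<alpha> \<in> \<Phi>. 0 < \<alpha> \<bullet> x} \<subseteq> s ` {\<alpha> \<in> \<Phi>. 0 < \<alpha> \<bullet> x}"
    proof
      fix \<alpha> assume "\<alpha> \<in> {\<alpha> \<in> \<Phi>. 0 < \<alpha> \<bullet> x}"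
      then show "\<alpha> \<in> s ` {\<alpha> \<in> \<Phi>. 0 < \<alpha> \<bullet> x}"
        using maps by (intro image_eqI[where x = "s \<alpha>"]) (simp_all add: s(4))
    qed
  qed
qed

lemma exists_common_S_chamber:
  assumes fin: "finite \<Phi>" and s: "s \<in> inv_set \<Phi>" and \<epsilon>: "\<epsilon> \<in> special_inv_set \<Phi>"
    and fixed: "\<forall>v. s v = v \<longrightarrow> \<epsilon> v = v"
  shows "\<exists>C. weyl_chamber \<Phi> C \<and> S_chamber \<Phi> s C \<and> \<epsilon> ` pos_roots \<Phi> C = pos_roots \<Phi> C"
proof -
  note s = inv_setD[OF s]
  have \<epsilon>I: "\<epsilon> \<in> inv_set \<Phi>" and "Phi_bullet \<Phi> \<epsilon> = {}" using \<epsilon> by (auto simp: special_inv_set_def)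
  note \<epsilon> = inv_setD[OF \<epsilon>I]
  have "finite (Phi_star \<Phi> s)" using fin by (simp add: Phi_star_def)
  then obtain u where "s u = u" and u: "\<forall>a\<in>Phi_star \<Phi> s. a \<bullet> u \<noteq> 0"
    using exists_fixed_vector_off_hyperplanes[OF s(1,4)] by (force simp: Phi_star_def Phi_bullet_def)
  obtain v where "\<epsilon> v = v" and v: "\<forall>a\<in>\<Phi>. a \<bullet> v \<noteq> 0"
    using exists_fixed_vector_off_hyperplanes[OF \<epsilon>(1,4) fin] \<open>Phi_bullet \<Phi> \<epsilon> = {}\<close>
    by (force simp: Phi_bullet_def)
  obtain t where "0 < t" and signs: "\<forall>a\<in>\<Phi>. a \<bullet> u \<noteq> 0 \<longrightarrow>
      sgn (a \<bullet> (u + t *\<^sub>R v)) = sgn (a \<bullet> u) \<and> sgn (a \<bullet> (u + t *\<^sub>R s v)) = sgn (a \<bullet> u)"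
    using exists_sign_preserving_perturbation[OF fin] by blast
  define x where "x = u + t *\<^sub>R v"
  have "\<epsilon> x = x"
    using \<epsilon>(3) \<open>\<epsilon> v = v\<close> fixed \<open>s u = u\<close> by (simp add: x_def linear_add linear_scale)
  have sx: "s x = u + t *\<^sub>R s v"
    using s(3) \<open>s u = u\<close> by (simp add: x_def linear_add linear_scale)
  have regular: "\<forall>a\<in>\<Phi>. a \<bullet> x \<noteq> 0"
  proof
    fix a assume "a \<in> \<Phi>"
    show "a \<bullet> x \<noteq> 0"
    proof (cases "a \<bullet> u = 0")
      case True
      then show ?thesis using v \<open>a \<in> \<Phi>\<close> \<open>0 < t\<close> by (simp add: x_def inner_add_right)
    next
      case False
      then have "sgn (a \<bullet> x) \<noteq> 0" using signs \<open>a \<in> \<Phi>\<close> by (simp add: x_def sgn_zero_iff)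
      then show ?thesis by auto
    qed
  qed
  have "S_chamber \<Phi> s (chamber_of \<Phi> x)"
    unfolding S_chamber_def pos_roots_chamber_of[OF regular]
  proof (intro image_subsetI CollectI conjI)
    fix a assume "a \<in> {\<alpha> \<in> \<Phi>. 0 < \<alpha> \<bullet> x} \<inter> Phi_star \<Phi> s"
    then have a: "a \<in> \<Phi>" "0 < a \<bullet> x" "a \<in> Phi_star \<Phi> s" by auto
    have "sgn (a \<bullet> s x) = sgn (a \<bullet> x)" using signs u a(1,3) unfolding sx by (simp add: x_def)
    with a(2) have "0 < a \<bullet> s x" by (metis sgn_greater)
    then show "0 < s a \<bullet> x" by (simp add: s(5))
    show "s a \<in> \<Phi>" using a(1) s(2) by blast
  qed
  moreover have "\<epsilon> ` pos_roots \<Phi> (chamber_of \<Phi> x) = pos_roots \<Phi> (chamber_of \<Phi> x)"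
    unfolding pos_roots_chamber_of[OF regular] using \<epsilon>I \<open>\<epsilon> x = x\<close> by (rule image_positive_roots_fixed)
  ultimately show ?thesis using weyl_chamber_chamber_of[OF regular] by blast
qed

theorem proposition2p34:
  fixes \<Phi> :: "'a::euclidean_space set" and s :: "'a \<Rightarrow> 'a"
  assumes "reduced_cryst_root_system \<Phi>"
    and "s \<in> inv_set \<Phi>"
  shows "\<exists>C \<epsilon> (\<beta>s :: 'a list).
           weyl_chamber \<Phi> C \<and> \<epsilon> \<in> special_inv_set \<Phi> \<and>
           distinct \<beta>s \<and>
           set \<beta>s \<subseteq> Phi_circ \<Phi> \<epsilon> \<inter> Phi_bullet \<Phi> s \<and>
           (\<forall>i<length \<beta>s. \<forall>j<length \<beta>s. i \<noteq> j \<longrightarrow>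
               strongly_orthogonal \<Phi> (\<beta>s ! i) (\<beta>s ! j)) \<and>
           s = foldl (\<lambda>f \<beta>. f \<circ> refl \<beta>) \<epsilon> \<beta>s \<and>
           S_chamber \<Phi> s C \<and> S_chamber \<Phi> \<epsilon> C \<and>
           \<epsilon> ` pos_roots \<Phi> C = pos_roots \<Phi> C"
proof -
  have fin: "finite \<Phi>" and "0 \<notin> \<Phi>" and "\<forall>\<alpha>\<in>\<Phi>. refl \<alpha> ` \<Phi> = \<Phi>"
    using assms(1) by (auto simp: reduced_cryst_root_system_def)
  then obtain \<epsilon> \<beta>s where \<epsilon>: "\<epsilon> \<in> special_inv_set \<Phi>" and "distinct \<beta>s"
      and "set \<beta>s \<subseteq> Phi_circ \<Phi> \<epsilon> \<inter> Phi_bullet \<Phi> s"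
      and "pairwise (strongly_orthogonal \<Phi>) (set \<beta>s)"
      and "s = foldl (\<lambda>f \<beta>. f \<circ> refl \<beta>) \<epsilon> \<beta>s"
      and fixed: "\<forall>v. s v = v \<longrightarrow> \<epsilon> v = v"
    using special_involution_decomposition[OF _ _ _ assms(2)] by blast
  obtain C where "weyl_chamber \<Phi> C" "S_chamber \<Phi> s C"
      and stable: "\<epsilon> ` pos_roots \<Phi> C = pos_roots \<Phi> C"
    using exists_common_S_chamber[OF fin assms(2) \<epsilon> fixed] by blast
  moreover have "S_chamber \<Phi> \<epsilon> C" using stable by (auto simp: S_chamber_def)
  ultimately show ?thesis
    using \<epsilon> \<open>distinct \<beta>s\<close> \<open>set \<beta>s \<subseteq> Phi_circ \<Phi> \<epsilon> \<inter> Phi_bullet \<Phi> s\<close>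
      \<open>pairwise (strongly_orthogonal \<Phi>) (set \<beta>s)\<close> \<open>s = foldl (\<lambda>f \<beta>. f \<circ> refl \<beta>) \<epsilon> \<beta>s\<close>
    by (intro exI[of _ C] exI[of _ \<epsilon>] exI[of _ \<beta>s] conjI)
      (simp_all only: distinct_pairwise_conv_nth)
qed

end
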